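(* (1) If $T\to A\overset{f}{\to}B\to T[1]$ is a distinguished triangle in $\mathscr{C}$ with $T\in\mathcal{T}$, then $B\in\mathscr{C}^+$ implies $A\in\mathscr{C}^+$. (2) If $V\to A\overset{f}{\to}B\to V[1]$ is a distinguished triangle in $\mathscr{C}$ with $V\in\mathcal{V}$, then $A\in\mathscr{C}^+$ implies $B\in\mathscr{C}^+$.
   Context: $\mathscr{C}$ is a triangulated category with shift $[1]$; subcategories are full, additive, closed under isomorphisms and direct summands. $\mathrm{Ext}^1(X,Y)=\mathscr{C}(X,Y[1])$. $\mathcal{M}\ast\mathcal{N}$ is the full subcategory of objects $C$ admitting a distinguished triangle $M\to C\to N\to M[1]$ with $M\in\mathcal{M}$, $N\in\mathcal{N}$. A cotorsion pair $(\mathcal{U},\mathcal{V})$: $\mathrm{Ext}^1(\mathcal{U},\mathcal{V})=0$ and $\mathscr{C}=\mathcal{U}\ast\mathcal{V}[1]$. Fix a twin cotorsion pair, i.e. cotorsion pairs $(\mathcal{S},\mathcal{T}),(\mathcal{U},\mathcal{V})$ with $\mathrm{Ext}^1(\mathcal{S},\mathcal{V})=0$. Put $\mathcal{W}=\mathcal{T}\cap\mathcal{U}$ and $\mathscr{C}^+=\mathcal{W}\ast\mathcal{V}[1]$. *)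

theory Defs
  imports Main
begin

text \<open>A triangulated category, given concretely: objects of type 'o, morphisms of
type 'm, hom-sets, composition (cmp C g f = g after f), identities, the abelian
group structure on hom-sets, the shift functor [1] on objects and morphisms, and
the class of distinguished triangles (X,Y,Z,f,g,h) meaning X -f-> Y -g-> Z -h-> X[1].\<close>

record ('o,'m) tricat =
  Ob   :: "'o set"
  Hom  :: "'o \<Rightarrow> 'o \<Rightarrow> 'm set"
  cmp  :: "'m \<Rightarrow> 'm \<Rightarrow> 'm"
  idm  :: "'o \<Rightarrow> 'm"
  addm :: "'m \<Rightarrow> 'm \<Rightarrow> 'm"
  zerm :: "'o \<Rightarrow> 'o \<Rightarrow> 'm"
  negm :: "'m \<Rightarrow> 'm"
  sh   :: "'o \<Rightarrow> 'o"
  shm  :: "'m \<Rightarrow> 'm"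
  dtri :: "('o \<times> 'o \<times> 'o \<times> 'm \<times> 'm \<times> 'm) set"

definition is_category :: "('o,'m,'x) tricat_scheme \<Rightarrow> bool" where
  "is_category C \<longleftrightarrow>
     (\<forall>X Y f. f \<in> Hom C X Y \<longrightarrow> X \<in> Ob C \<and> Y \<in> Ob C) \<and>
     (\<forall>X Y X' Y' f. f \<in> Hom C X Y \<and> f \<in> Hom C X' Y' \<longrightarrow> X = X' \<and> Y = Y') \<and>
     (\<forall>X Y Z f g. f \<in> Hom C X Y \<and> g \<in> Hom C Y Z \<longrightarrow> cmp C g f \<in> Hom C X Z) \<and>
     (\<forall>W X Y Z f g h. f \<in> Hom C W X \<and> g \<in> Hom C X Y \<and> h \<in> Hom C Y Z \<longrightarrow>
         cmp C h (cmp C g f) = cmp C (cmp C h g) f) \<and>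
     (\<forall>X \<in> Ob C. idm C X \<in> Hom C X X) \<and>
     (\<forall>X Y f. f \<in> Hom C X Y \<longrightarrow> cmp C f (idm C X) = f \<and> cmp C (idm C Y) f = f)"

definition is_preadditive :: "('o,'m,'x) tricat_scheme \<Rightarrow> bool" where
  "is_preadditive C \<longleftrightarrow>
     (\<forall>X \<in> Ob C. \<forall>Y \<in> Ob C.
        zerm C X Y \<in> Hom C X Y \<and>
        (\<forall>f \<in> Hom C X Y. \<forall>g \<in> Hom C X Y. addm C f g \<in> Hom C X Y \<and> addm C f g = addm C g f) \<and>
        (\<forall>f \<in> Hom C X Y. \<forall>g \<in> Hom C X Y. \<forall>h \<in> Hom C X Y.
            addm C (addm C f g) h = addm C f (addm C g h)) \<and>
        (\<forall>f \<in> Hom C X Y. negm C f \<in> Hom C X Y \<and> addm C f (zerm C X Y) = f \<and>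
            addm C f (negm C f) = zerm C X Y)) \<and>
     (\<forall>X Y Z f g h. f \<in> Hom C X Y \<and> g \<in> Hom C Y Z \<and> h \<in> Hom C Y Z \<longrightarrow>
         cmp C (addm C g h) f = addm C (cmp C g f) (cmp C h f)) \<and>
     (\<forall>X Y Z f g h. f \<in> Hom C X Y \<and> g \<in> Hom C X Y \<and> h \<in> Hom C Y Z \<longrightarrow>
         cmp C h (addm C f g) = addm C (cmp C h f) (cmp C h g))"

definition iso :: "('o,'m,'x) tricat_scheme \<Rightarrow> 'o \<Rightarrow> 'o \<Rightarrow> 'm \<Rightarrow> bool" where
  "iso C X Y f \<longleftrightarrow> f \<in> Hom C X Y \<and>
     (\<exists>g \<in> Hom C Y X. cmp C g f = idm C X \<and> cmp C f g = idm C Y)"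

definition isomorphic :: "('o,'m,'x) tricat_scheme \<Rightarrow> 'o \<Rightarrow> 'o \<Rightarrow> bool" where
  "isomorphic C X Y \<longleftrightarrow> (\<exists>f. iso C X Y f)"

definition is_zero_obj :: "('o,'m,'x) tricat_scheme \<Rightarrow> 'o \<Rightarrow> bool" where
  "is_zero_obj C Z \<longleftrightarrow> Z \<in> Ob C \<and>
     (\<forall>X \<in> Ob C. (\<exists>!f. f \<in> Hom C Z X) \<and> (\<exists>!f. f \<in> Hom C X Z))"

definition is_biproduct ::
  "('o,'m,'x) tricat_scheme \<Rightarrow> 'o \<Rightarrow> 'o \<Rightarrow> 'o \<Rightarrow> 'm \<Rightarrow> 'm \<Rightarrow> 'm \<Rightarrow> 'm \<Rightarrow> bool" where
  "is_biproduct C X Y S i1 i2 p1 p2 \<longleftrightarrow>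
     i1 \<in> Hom C X S \<and> i2 \<in> Hom C Y S \<and> p1 \<in> Hom C S X \<and> p2 \<in> Hom C S Y \<and>
     cmp C p1 i1 = idm C X \<and> cmp C p2 i2 = idm C Y \<and>
     cmp C p2 i1 = zerm C X Y \<and> cmp C p1 i2 = zerm C Y X \<and>
     addm C (cmp C i1 p1) (cmp C i2 p2) = idm C S"

definition is_additive :: "('o,'m,'x) tricat_scheme \<Rightarrow> bool" where
  "is_additive C \<longleftrightarrow> is_category C \<and> is_preadditive C \<and>
     (\<exists>Z. is_zero_obj C Z) \<and>
     (\<forall>X \<in> Ob C. \<forall>Y \<in> Ob C. \<exists>S i1 i2 p1 p2. is_biproduct C X Y S i1 i2 p1 p2)"

definition shift_ok :: "('o,'m,'x) tricat_scheme \<Rightarrow> bool" where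
  "shift_ok C \<longleftrightarrow>
     (\<forall>X \<in> Ob C. sh C X \<in> Ob C) \<and>
     (\<forall>X Y f. f \<in> Hom C X Y \<longrightarrow> shm C f \<in> Hom C (sh C X) (sh C Y)) \<and>
     (\<forall>X Y Z f g. f \<in> Hom C X Y \<and> g \<in> Hom C Y Z \<longrightarrow>
         shm C (cmp C g f) = cmp C (shm C g) (shm C f)) \<and>
     (\<forall>X \<in> Ob C. shm C (idm C X) = idm C (sh C X)) \<and>
     (\<forall>X Y f g. f \<in> Hom C X Y \<and> g \<in> Hom C X Y \<longrightarrow> shm C (addm C f g) = addm C (shm C f) (shm C g)) \<and>
     (\<forall>X \<in> Ob C. \<forall>Y \<in> Ob C. bij_betw (shm C) (Hom C X Y) (Hom C (sh C X) (sh C Y))) \<and>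
     (\<forall>Y \<in> Ob C. \<exists>X \<in> Ob C. isomorphic C (sh C X) Y)"

definition is_triangle ::
  "('o,'m,'x) tricat_scheme \<Rightarrow> 'o \<Rightarrow> 'o \<Rightarrow> 'o \<Rightarrow> 'm \<Rightarrow> 'm \<Rightarrow> 'm \<Rightarrow> bool" where
  "is_triangle C X Y Z f g h \<longleftrightarrow>
     f \<in> Hom C X Y \<and> g \<in> Hom C Y Z \<and> h \<in> Hom C Z (sh C X)"

definition tri_morph ::
  "('o,'m,'x) tricat_scheme \<Rightarrow> 'o \<Rightarrow> 'o \<Rightarrow> 'o \<Rightarrow> 'm \<Rightarrow> 'm \<Rightarrow> 'm \<Rightarrow>
     'o \<Rightarrow> 'o \<Rightarrow> 'o \<Rightarrow> 'm \<Rightarrow> 'm \<Rightarrow> 'm \<Rightarrow> 'm \<Rightarrow> 'm \<Rightarrow> 'm \<Rightarrow> bool" where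
  "tri_morph C X Y Z f g h X' Y' Z' f' g' h' a b c \<longleftrightarrow>
     a \<in> Hom C X X' \<and> b \<in> Hom C Y Y' \<and> c \<in> Hom C Z Z' \<and>
     cmp C b f = cmp C f' a \<and> cmp C c g = cmp C g' b \<and>
     cmp C (shm C a) h = cmp C h' c"

definition triangulated :: "('o,'m,'x) tricat_scheme \<Rightarrow> bool" where
  "triangulated C \<longleftrightarrow> is_additive C \<and> shift_ok C \<and>
     \<comment> \<open>distinguished triangles are triangles\<close>
     (\<forall>X Y Z f g h. (X,Y,Z,f,g,h) \<in> dtri C \<longrightarrow> is_triangle C X Y Z f g h) \<and>
     \<comment> \<open>TR1: closed under isomorphism of triangles\<close>
     (\<forall>X Y Z f g h X' Y' Z' f' g' h' a b c.
        (X,Y,Z,f,g,h) \<in> dtri C \<and> is_triangle C X' Y' Z' f' g' h' \<and>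
        tri_morph C X Y Z f g h X' Y' Z' f' g' h' a b c \<and>
        iso C X X' a \<and> iso C Y Y' b \<and> iso C Z Z' c \<longrightarrow> (X',Y',Z',f',g',h') \<in> dtri C) \<and>
     \<comment> \<open>TR1: X -id-> X -> 0 -> X[1] is distinguished\<close>
     (\<forall>X \<in> Ob C. \<forall>Z. is_zero_obj C Z \<longrightarrow>
        (X, X, Z, idm C X, zerm C X Z, zerm C Z (sh C X)) \<in> dtri C) \<and>
     \<comment> \<open>TR1: every morphism extends to a distinguished triangle\<close>
     (\<forall>X Y f. f \<in> Hom C X Y \<longrightarrow> (\<exists>Z g h. (X,Y,Z,f,g,h) \<in> dtri C)) \<and>
     \<comment> \<open>TR2: rotation\<close>
     (\<forall>X Y Z f g h. (X,Y,Z,f,g,h) \<in> dtri C \<longleftrightarrow>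
        is_triangle C X Y Z f g h \<and> (Y, Z, sh C X, g, h, negm C (shm C f)) \<in> dtri C) \<and>
     \<comment> \<open>TR3: completion of morphisms of triangles\<close>
     (\<forall>X Y Z f g h X' Y' Z' f' g' h' a b.
        (X,Y,Z,f,g,h) \<in> dtri C \<and> (X',Y',Z',f',g',h') \<in> dtri C \<and>
        a \<in> Hom C X X' \<and> b \<in> Hom C Y Y' \<and> cmp C b f = cmp C f' a \<longrightarrow>
        (\<exists>c. tri_morph C X Y Z f g h X' Y' Z' f' g' h' a b c)) \<and>
     \<comment> \<open>TR4: octahedral axiom\<close>
     (\<forall>X Y Z f g Z' i i' X' j j' Y' k k'.
        f \<in> Hom C X Y \<and> g \<in> Hom C Y Z \<and>
        (X,Y,Z',f,i,i') \<in> dtri C \<and> (Y,Z,X',g,j,j') \<in> dtri C \<and>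
        (X,Z,Y',cmp C g f,k,k') \<in> dtri C \<longrightarrow>
        (\<exists>u v. (Z',Y',X',u,v, cmp C (shm C i) j') \<in> dtri C \<and>
           cmp C u i = cmp C k g \<and> cmp C k' u = i' \<and>
           cmp C v k = j \<and> cmp C j' v = cmp C (shm C f) k'))"

text \<open>Full additive subcategories closed under isomorphisms and direct summands,
identified with their classes of objects.\<close>
definition subcat :: "('o,'m,'x) tricat_scheme \<Rightarrow> 'o set \<Rightarrow> bool" where
  "subcat C D \<longleftrightarrow> D \<subseteq> Ob C \<and>
     (\<forall>Z. is_zero_obj C Z \<longrightarrow> Z \<in> D) \<and>
     (\<forall>X Y. X \<in> D \<and> isomorphic C X Y \<longrightarrow> Y \<in> D) \<and>
     (\<forall>X Y S i1 i2 p1 p2. is_biproduct C X Y S i1 i2 p1 p2 \<longrightarrow>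
        (X \<in> D \<and> Y \<in> D \<longrightarrow> S \<in> D) \<and> (S \<in> D \<longrightarrow> X \<in> D \<and> Y \<in> D))"

definition ext1_zero :: "('o,'m,'x) tricat_scheme \<Rightarrow> 'o set \<Rightarrow> 'o set \<Rightarrow> bool" where
  "ext1_zero C A B \<longleftrightarrow> (\<forall>X \<in> A. \<forall>Y \<in> B. Hom C X (sh C Y) = {zerm C X (sh C Y)})"

definition shift_sub :: "('o,'m,'x) tricat_scheme \<Rightarrow> 'o set \<Rightarrow> 'o set" where
  "shift_sub C D = {X \<in> Ob C. \<exists>Y \<in> D. isomorphic C X (sh C Y)}"

definition star :: "('o,'m,'x) tricat_scheme \<Rightarrow> 'o set \<Rightarrow> 'o set \<Rightarrow> 'o set" where
  "star C M N = {A \<in> Ob C. \<exists>X Y f g h. X \<in> M \<and> Y \<in> N \<and> (X,A,Y,f,g,h) \<in> dtri C}"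

definition cotorsion_pair :: "('o,'m,'x) tricat_scheme \<Rightarrow> 'o set \<Rightarrow> 'o set \<Rightarrow> bool" where
  "cotorsion_pair C U V \<longleftrightarrow> subcat C U \<and> subcat C V \<and> ext1_zero C U V \<and>
     Ob C = star C U (shift_sub C V)"

definition twin_cotorsion_pair ::
  "('o,'m,'x) tricat_scheme \<Rightarrow> 'o set \<Rightarrow> 'o set \<Rightarrow> 'o set \<Rightarrow> 'o set \<Rightarrow> bool" where
  "twin_cotorsion_pair C S T U V \<longleftrightarrow>
     cotorsion_pair C S T \<and> cotorsion_pair C U V \<and> ext1_zero C S V"

definition Cplus :: "('o,'m,'x) tricat_scheme \<Rightarrow> 'o set \<Rightarrow> 'o set \<Rightarrow> 'o set \<Rightarrow> 'o set" where
  "Cplus C T U V = star C (T \<inter> U) (shift_sub C V)"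

end

theory Submission
  imports Defs
begin

text \<open>Let \<open>T \<rightarrow> A \<rightarrow> B \<rightarrow> T[1]\<close> be distinguished with \<open>T \<in> \<T>\<close> and \<open>B \<in> \<C>\<^sup>+\<close>, and take a
triangle \<open>U\<^sub>A \<rightarrow> A \<rightarrow> V\<^sub>A[1] \<rightarrow> U\<^sub>A[1]\<close> from the cotorsion pair \<open>(\<U>,\<V>)\<close>.  It suffices to show
\<open>U\<^sub>A \<in> \<T>\<close>, i.e. \<open>Ext\<^sup>1(\<S>, U\<^sub>A) = 0\<close>.  Since \<open>Ext\<^sup>1(\<S>,\<V>) = 0\<close>, the long exact sequence of
\<open>Hom(s,-)\<close> makes \<open>Ext\<^sup>1(s,U\<^sub>A) \<rightarrow> Ext\<^sup>1(s,A)\<close> injective, so it is enough that this map vanishes.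
The key observation is that for any \<open>M \<in> \<C>\<^sup>+\<close>, with triangle \<open>W \<rightarrow> M \<rightarrow> V'[1]\<close>, \<open>W \<in> \<T> \<inter> \<U>\<close>,
every map \<open>u : P \<rightarrow> M\<close> from \<open>P \<in> \<U>\<close> induces the zero map \<open>Ext\<^sup>1(s,P) \<rightarrow> Ext\<^sup>1(s,M)\<close>: its
composite into \<open>V'[1]\<close> vanishes and \<open>Ext\<^sup>1(s,W) = 0\<close>.  In (1) apply this to \<open>U\<^sub>A \<rightarrow> A \<rightarrow> B\<close> and
use \<open>Ext\<^sup>1(s,T) = 0\<close>; in (2) lift \<open>U\<^sub>B \<rightarrow> B\<close> to \<open>A\<close>, which is possible as \<open>Hom(\<U>, \<V>[1]) = 0\<close>.\<close>

locale triangulated_category =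
  fixes C :: "('o,'m,'x) tricat_scheme"
  assumes triangulated: "triangulated C"
begin

lemma is_category: "is_category C" and is_preadditive: "is_preadditive C"
  and shift_ok: "shift_ok C" and is_additive: "is_additive C"
  using triangulated unfolding triangulated_def is_additive_def by auto

subsection \<open>Preadditive categories\<close>

lemma hom_obs: "f \<in> Hom C X Y \<Longrightarrow> X \<in> Ob C \<and> Y \<in> Ob C"
  using is_category unfolding is_category_def by meson

lemma comp_in_hom: "f \<in> Hom C X Y \<Longrightarrow> g \<in> Hom C Y Z \<Longrightarrow> cmp C g f \<in> Hom C X Z"
  using is_category unfolding is_category_def by meson

lemma comp_assoc: "f \<in> Hom C W X \<Longrightarrow> g \<in> Hom C X Y \<Longrightarrow> h \<in> Hom C Y Z \<Longrightarrow>
    cmp C h (cmp C g f) = cmp C (cmp C h g) f"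
  using is_category unfolding is_category_def by meson

lemma id_in_hom: "X \<in> Ob C \<Longrightarrow> idm C X \<in> Hom C X X"
  using is_category unfolding is_category_def by meson

lemma comp_id_right: "f \<in> Hom C X Y \<Longrightarrow> cmp C f (idm C X) = f"
  using is_category unfolding is_category_def by meson

lemma comp_id_left: "f \<in> Hom C X Y \<Longrightarrow> cmp C (idm C Y) f = f"
  using is_category unfolding is_category_def by meson

lemma zero_in_hom: "X \<in> Ob C \<Longrightarrow> Y \<in> Ob C \<Longrightarrow> zerm C X Y \<in> Hom C X Y"
  using is_preadditive unfolding is_preadditive_def by meson

lemma add_in_hom: "f \<in> Hom C X Y \<Longrightarrow> g \<in> Hom C X Y \<Longrightarrow> addm C f g \<in> Hom C X Y"
  using is_preadditive hom_obs unfolding is_preadditive_def by meson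

lemma add_commute: "f \<in> Hom C X Y \<Longrightarrow> g \<in> Hom C X Y \<Longrightarrow> addm C f g = addm C g f"
  using is_preadditive hom_obs unfolding is_preadditive_def by meson

lemma add_assoc: "f \<in> Hom C X Y \<Longrightarrow> g \<in> Hom C X Y \<Longrightarrow> h \<in> Hom C X Y \<Longrightarrow>
    addm C (addm C f g) h = addm C f (addm C g h)"
  using is_preadditive hom_obs unfolding is_preadditive_def by meson

lemma neg_in_hom: "f \<in> Hom C X Y \<Longrightarrow> negm C f \<in> Hom C X Y"
  using is_preadditive hom_obs unfolding is_preadditive_def by meson

lemma add_zero_right: "f \<in> Hom C X Y \<Longrightarrow> addm C f (zerm C X Y) = f"
  using is_preadditive hom_obs unfolding is_preadditive_def by meson

lemma add_neg_right: "f \<in> Hom C X Y \<Longrightarrow> addm C f (negm C f) = zerm C X Y"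
  using is_preadditive hom_obs unfolding is_preadditive_def by meson

lemma add_comp_distrib: "f \<in> Hom C X Y \<Longrightarrow> g \<in> Hom C Y Z \<Longrightarrow> h \<in> Hom C Y Z \<Longrightarrow>
    cmp C (addm C g h) f = addm C (cmp C g f) (cmp C h f)"
  using is_preadditive unfolding is_preadditive_def by meson

lemma comp_add_distrib: "f \<in> Hom C X Y \<Longrightarrow> g \<in> Hom C X Y \<Longrightarrow> h \<in> Hom C Y Z \<Longrightarrow>
    cmp C h (addm C f g) = addm C (cmp C h f) (cmp C h g)"
  using is_preadditive unfolding is_preadditive_def by meson

lemma add_zero_left: "f \<in> Hom C X Y \<Longrightarrow> addm C (zerm C X Y) f = f"
  by (metis add_commute add_zero_right hom_obs zero_in_hom)

lemma add_idem_eq_zero: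
  assumes a: "a \<in> Hom C X Y" and "addm C a a = a"
  shows "a = zerm C X Y"
proof -
  have "addm C (addm C a a) (negm C a) = addm C a (addm C a (negm C a))"
    using a neg_in_hom add_assoc by blast
  then show ?thesis using assms add_neg_right add_zero_right by simp
qed

lemma neg_unique:
  assumes a: "a \<in> Hom C X Y" and b: "b \<in> Hom C X Y" and ab: "addm C a b = zerm C X Y"
  shows "b = negm C a"
proof -
  have "negm C a = addm C (negm C a) (addm C a b)" using a neg_in_hom ab add_zero_right by simp
  also have "\<dots> = addm C (addm C (negm C a) a) b" using a b neg_in_hom add_assoc by metis
  also have "\<dots> = b" using a b neg_in_hom add_commute add_neg_right add_zero_left by metis
  finally show ?thesis by simp
qed

lemma neg_neg: "a \<in> Hom C X Y \<Longrightarrow> negm C (negm C a) = a"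
  by (metis add_commute add_neg_right neg_in_hom neg_unique)

lemma neg_zero: "X \<in> Ob C \<Longrightarrow> Y \<in> Ob C \<Longrightarrow> negm C (zerm C X Y) = zerm C X Y"
  by (metis add_zero_right neg_unique zero_in_hom)

lemma eq_if_add_neg_eq_zero:
  "a \<in> Hom C X Y \<Longrightarrow> b \<in> Hom C X Y \<Longrightarrow> addm C a (negm C b) = zerm C X Y \<Longrightarrow> a = b"
  by (metis neg_in_hom neg_neg neg_unique)

lemma zero_comp:
  assumes f: "f \<in> Hom C X Y" and Z: "Z \<in> Ob C"
  shows "cmp C (zerm C Y Z) f = zerm C X Z"
proof -
  have z: "zerm C Y Z \<in> Hom C Y Z" using f Z hom_obs zero_in_hom by blast
  have "addm C (cmp C (zerm C Y Z) f) (cmp C (zerm C Y Z) f) = cmp C (zerm C Y Z) f"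
    using add_comp_distrib[OF f z z] add_zero_right[OF z] by simp
  then show ?thesis using add_idem_eq_zero comp_in_hom f z by blast
qed

lemma comp_zero:
  assumes g: "g \<in> Hom C Y Z" and X: "X \<in> Ob C"
  shows "cmp C g (zerm C X Y) = zerm C X Z"
proof -
  have z: "zerm C X Y \<in> Hom C X Y" using g X hom_obs zero_in_hom by blast
  have "addm C (cmp C g (zerm C X Y)) (cmp C g (zerm C X Y)) = cmp C g (zerm C X Y)"
    using comp_add_distrib[OF z z g] add_zero_right[OF z] by simp
  then show ?thesis using add_idem_eq_zero comp_in_hom g z by blast
qed

lemma neg_comp:
  assumes a: "a \<in> Hom C Y Z" and c: "c \<in> Hom C X Y"
  shows "cmp C (negm C a) c = negm C (cmp C a c)"
proof -
  have "addm C (cmp C a c) (cmp C (negm C a) c) = cmp C (addm C a (negm C a)) c"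
    using add_comp_distrib[OF c a neg_in_hom[OF a]] by simp
  also have "\<dots> = zerm C X Z" using add_neg_right[OF a] zero_comp c a hom_obs by metis
  finally show ?thesis using neg_unique comp_in_hom a c neg_in_hom by metis
qed

lemma comp_neg:
  assumes a: "a \<in> Hom C X Y" and c: "c \<in> Hom C Y Z"
  shows "cmp C c (negm C a) = negm C (cmp C c a)"
proof -
  have "addm C (cmp C c a) (cmp C c (negm C a)) = cmp C c (addm C a (negm C a))"
    using comp_add_distrib[OF a neg_in_hom[OF a] c] by simp
  also have "\<dots> = zerm C X Z" using add_neg_right[OF a] comp_zero c a hom_obs by metis
  finally show ?thesis using neg_unique comp_in_hom a c neg_in_hom by metis
qed

lemma neg_comp_eq_zero_iff:
  assumes a: "a \<in> Hom C Y Z" and c: "c \<in> Hom C X Y"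
  shows "cmp C (negm C a) c = zerm C X Z \<longleftrightarrow> cmp C a c = zerm C X Z"
  using neg_comp[OF a c] neg_neg[OF comp_in_hom[OF c a]] neg_zero hom_obs a c by metis

lemma sh_in_Ob: "X \<in> Ob C \<Longrightarrow> sh C X \<in> Ob C"
  using shift_ok unfolding shift_ok_def by meson

lemma shm_in_hom: "f \<in> Hom C X Y \<Longrightarrow> shm C f \<in> Hom C (sh C X) (sh C Y)"
  using shift_ok unfolding shift_ok_def by meson

lemma shm_comp:
  "f \<in> Hom C X Y \<Longrightarrow> g \<in> Hom C Y Z \<Longrightarrow> shm C (cmp C g f) = cmp C (shm C g) (shm C f)"
  using shift_ok unfolding shift_ok_def by meson

lemma shm_id: "X \<in> Ob C \<Longrightarrow> shm C (idm C X) = idm C (sh C X)"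
  using shift_ok unfolding shift_ok_def by meson

lemma shm_add:
  "f \<in> Hom C X Y \<Longrightarrow> g \<in> Hom C X Y \<Longrightarrow> shm C (addm C f g) = addm C (shm C f) (shm C g)"
  using shift_ok unfolding shift_ok_def by meson

lemma shm_bij:
  "X \<in> Ob C \<Longrightarrow> Y \<in> Ob C \<Longrightarrow> bij_betw (shm C) (Hom C X Y) (Hom C (sh C X) (sh C Y))"
  using shift_ok unfolding shift_ok_def by meson

lemma shm_inj: "f \<in> Hom C X Y \<Longrightarrow> g \<in> Hom C X Y \<Longrightarrow> shm C f = shm C g \<Longrightarrow> f = g"
  using shm_bij hom_obs unfolding bij_betw_def inj_on_def by meson

lemma shm_surj:
  assumes "X \<in> Ob C" "Y \<in> Ob C" "h \<in> Hom C (sh C X) (sh C Y)"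
  shows "\<exists>f \<in> Hom C X Y. shm C f = h"
  using shm_bij[OF assms(1,2)] assms(3) unfolding bij_betw_def by (metis imageE)

lemma shm_zero:
  assumes "X \<in> Ob C" "Y \<in> Ob C"
  shows "shm C (zerm C X Y) = zerm C (sh C X) (sh C Y)"
proof -
  have z: "zerm C X Y \<in> Hom C X Y" using assms zero_in_hom by blast
  have "addm C (shm C (zerm C X Y)) (shm C (zerm C X Y)) = shm C (zerm C X Y)"
    using shm_add[OF z z] add_zero_right[OF z] by simp
  then show ?thesis using add_idem_eq_zero shm_in_hom z by blast
qed

lemma shm_comp_assoc:
  "f \<in> Hom C X Y \<Longrightarrow> g \<in> Hom C Y Z \<Longrightarrow> x \<in> Hom C W (sh C X) \<Longrightarrow>
    cmp C (shm C g) (cmp C (shm C f) x) = cmp C (shm C (cmp C g f)) x"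
  using comp_assoc[OF _ shm_in_hom shm_in_hom] shm_comp by simp

lemma zero_obj_exists: "\<exists>Z. is_zero_obj C Z"
  using is_additive unfolding is_additive_def by blast

lemma zero_obj_in_Ob: "is_zero_obj C Z \<Longrightarrow> Z \<in> Ob C"
  unfolding is_zero_obj_def by blast

lemma zero_obj_iff_id_eq_zero:
  assumes Z: "Z \<in> Ob C"
  shows "is_zero_obj C Z \<longleftrightarrow> idm C Z = zerm C Z Z"
proof
  assume "is_zero_obj C Z"
  then have "\<exists>!f. f \<in> Hom C Z Z" using Z unfolding is_zero_obj_def by blast
  then show "idm C Z = zerm C Z Z" using id_in_hom zero_in_hom Z by metis
next
  assume i: "idm C Z = zerm C Z Z"
  show "is_zero_obj C Z"
    unfolding is_zero_obj_def
  proof (intro conjI ballI Z)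
    fix X assume X: "X \<in> Ob C"
    have "f = zerm C Z X" if "f \<in> Hom C Z X" for f
      using that comp_id_right[OF that] i comp_zero Z by metis
    then show "\<exists>!f. f \<in> Hom C Z X" using zero_in_hom Z X by metis
    have "f = zerm C X Z" if "f \<in> Hom C X Z" for f
      using that comp_id_left[OF that] i zero_comp Z by metis
    then show "\<exists>!f. f \<in> Hom C X Z" using zero_in_hom Z X by metis
  qed
qed

lemma sh_zero_obj: "is_zero_obj C Z \<Longrightarrow> is_zero_obj C (sh C Z)"
  using zero_obj_iff_id_eq_zero shm_id shm_zero sh_in_Ob zero_obj_in_Ob by metis

subsection \<open>Distinguished triangles\<close>

lemma dtri_homs:
  "(X,Y,Z,f,g,h) \<in> dtri C \<Longrightarrow> f \<in> Hom C X Y \<and> g \<in> Hom C Y Z \<and> h \<in> Hom C Z (sh C X)"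
proof -
  have "\<forall>X Y Z f g h. (X,Y,Z,f,g,h) \<in> dtri C \<longrightarrow> is_triangle C X Y Z f g h"
    using triangulated unfolding triangulated_def by (elim conjE) assumption
  then show "(X,Y,Z,f,g,h) \<in> dtri C \<Longrightarrow> ?thesis" unfolding is_triangle_def by blast
qed

lemma dtri_id_zero:
  "X \<in> Ob C \<Longrightarrow> is_zero_obj C Z \<Longrightarrow>
    (X, X, Z, idm C X, zerm C X Z, zerm C Z (sh C X)) \<in> dtri C"
proof -
  have "\<forall>X \<in> Ob C. \<forall>Z. is_zero_obj C Z \<longrightarrow>
      (X, X, Z, idm C X, zerm C X Z, zerm C Z (sh C X)) \<in> dtri C"
    using triangulated unfolding triangulated_def by (elim conjE) assumption
  then show "X \<in> Ob C \<Longrightarrow> is_zero_obj C Z \<Longrightarrow> ?thesis" by blast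
qed

lemma dtri_exists: "f \<in> Hom C X Y \<Longrightarrow> \<exists>Z g h. (X,Y,Z,f,g,h) \<in> dtri C"
proof -
  have "\<forall>X Y f. f \<in> Hom C X Y \<longrightarrow> (\<exists>Z g h. (X,Y,Z,f,g,h) \<in> dtri C)"
    using triangulated unfolding triangulated_def by (elim conjE) assumption
  then show "f \<in> Hom C X Y \<Longrightarrow> ?thesis" by blast
qed

lemma dtri_rotate_iff:
  "(X,Y,Z,f,g,h) \<in> dtri C \<longleftrightarrow>
    is_triangle C X Y Z f g h \<and> (Y, Z, sh C X, g, h, negm C (shm C f)) \<in> dtri C"
proof -
  have "\<forall>X Y Z f g h. (X,Y,Z,f,g,h) \<in> dtri C \<longleftrightarrow>
      is_triangle C X Y Z f g h \<and> (Y, Z, sh C X, g, h, negm C (shm C f)) \<in> dtri C"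
    using triangulated unfolding triangulated_def by (elim conjE) assumption
  then show ?thesis by blast
qed

lemma dtri_rotate:
  "(X,Y,Z,f,g,h) \<in> dtri C \<Longrightarrow> (Y, Z, sh C X, g, h, negm C (shm C f)) \<in> dtri C"
  using dtri_rotate_iff by blast

lemma dtri_morphism_exists:
  "(X,Y,Z,f,g,h) \<in> dtri C \<Longrightarrow> (X',Y',Z',f',g',h') \<in> dtri C \<Longrightarrow>
    a \<in> Hom C X X' \<Longrightarrow> b \<in> Hom C Y Y' \<Longrightarrow> cmp C b f = cmp C f' a \<Longrightarrow>
    \<exists>c. tri_morph C X Y Z f g h X' Y' Z' f' g' h' a b c"
proof -
  have "\<forall>X Y Z f g h X' Y' Z' f' g' h' a b.
      (X,Y,Z,f,g,h) \<in> dtri C \<and> (X',Y',Z',f',g',h') \<in> dtri C \<and>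
      a \<in> Hom C X X' \<and> b \<in> Hom C Y Y' \<and> cmp C b f = cmp C f' a \<longrightarrow>
      (\<exists>c. tri_morph C X Y Z f g h X' Y' Z' f' g' h' a b c)"
    using triangulated unfolding triangulated_def by (elim conjE) assumption
  then show "(X,Y,Z,f,g,h) \<in> dtri C \<Longrightarrow> (X',Y',Z',f',g',h') \<in> dtri C \<Longrightarrow>
      a \<in> Hom C X X' \<Longrightarrow> b \<in> Hom C Y Y' \<Longrightarrow> cmp C b f = cmp C f' a \<Longrightarrow> ?thesis"
    by blast
qed

lemma dtri_zero_id:
  assumes z: "is_zero_obj C Z" and W: "W \<in> Ob C"
  shows "(Z, W, W, zerm C Z W, idm C W, zerm C W (sh C Z)) \<in> dtri C"
proof -
  have Z: "Z \<in> Ob C" using z zero_obj_in_Ob by blast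
  have "negm C (shm C (zerm C Z W)) = zerm C (sh C Z) (sh C W)"
    using shm_zero neg_zero sh_in_Ob Z W by metis
  then have "(W, W, sh C Z, idm C W, zerm C W (sh C Z), negm C (shm C (zerm C Z W))) \<in> dtri C"
    using dtri_id_zero[OF W sh_zero_obj[OF z]] by simp
  moreover have "is_triangle C Z W W (zerm C Z W) (idm C W) (zerm C W (sh C Z))"
    unfolding is_triangle_def using zero_in_hom id_in_hom Z W sh_in_Ob by blast
  ultimately show ?thesis using dtri_rotate_iff by blast
qed

lemma dtri_comp_zero:
  assumes d: "(X,Y,Z,f,g,h) \<in> dtri C"
  shows "cmp C g f = zerm C X Z"
proof -
  obtain Z0 where z: "is_zero_obj C Z0" using zero_obj_exists by blast
  have f: "f \<in> Hom C X Y" using dtri_homs[OF d] by auto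
  have X: "X \<in> Ob C" using f hom_obs by blast
  obtain c where "tri_morph C X X Z0 (idm C X) (zerm C X Z0) (zerm C Z0 (sh C X))
      X Y Z f g h (idm C X) f c"
    using dtri_morphism_exists[OF dtri_id_zero[OF X z] d id_in_hom[OF X] f] by blast
  then have "c \<in> Hom C Z0 Z" "cmp C c (zerm C X Z0) = cmp C g f" unfolding tri_morph_def by auto
  then show ?thesis using comp_zero X by metis
qed

text \<open>The lift is obtained from a morphism of triangles out of the rotation of \<open>W = W \<rightarrow> 0\<close>
and then un-shifted.\<close>

lemma dtri_factors_through_fst:
  assumes d: "(X,Y,Z,f,g,h) \<in> dtri C" and u: "u \<in> Hom C W Y"
    and gu: "cmp C g u = zerm C W Z"
  shows "\<exists>v \<in> Hom C W X. cmp C f v = u"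
proof -
  obtain Z0 where z: "is_zero_obj C Z0" using zero_obj_exists by blast
  have Z0: "Z0 \<in> Ob C" using z zero_obj_in_Ob by blast
  have f: "f \<in> Hom C X Y" and g: "g \<in> Hom C Y Z" using dtri_homs[OF d] by auto
  have W: "W \<in> Ob C" and X: "X \<in> Ob C" and Z: "Z \<in> Ob C" using u f g hom_obs by auto
  have "cmp C (zerm C Z0 Z) (zerm C W Z0) = cmp C g u"
    using gu zero_comp zero_in_hom W Z0 Z by metis
  then obtain c where "tri_morph C W Z0 (sh C W) (zerm C W Z0) (zerm C Z0 (sh C W))
      (negm C (shm C (idm C W))) Y Z (sh C X) g h (negm C (shm C f)) u (zerm C Z0 Z) c"
    using dtri_morphism_exists[OF dtri_rotate[OF dtri_id_zero[OF W z]] dtri_rotate[OF d] u]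
      zero_in_hom[OF Z0 Z] by blast
  then have c: "c \<in> Hom C (sh C W) (sh C X)"
    and sq: "cmp C (shm C u) (negm C (shm C (idm C W))) = cmp C (negm C (shm C f)) c"
    unfolding tri_morph_def by auto
  have su: "shm C u \<in> Hom C (sh C W) (sh C Y)" and sf: "shm C f \<in> Hom C (sh C X) (sh C Y)"
    using shm_in_hom u f by blast+
  have "negm C (shm C u) = negm C (cmp C (shm C f) c)"
    using sq shm_id[OF W] comp_neg id_in_hom sh_in_Ob W su comp_id_right neg_comp[OF sf c]
    by metis
  then have e: "shm C u = cmp C (shm C f) c" using neg_neg su comp_in_hom[OF c sf] by metis
  obtain v where v: "v \<in> Hom C W X" "shm C v = c" using shm_surj W X c by blast
  have "u = cmp C f v" using e v shm_comp f shm_inj u comp_in_hom by metis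
  then show ?thesis using v by blast
qed

lemma dtri_factors_through_snd:
  assumes d: "(X,Y,Z,f,g,h) \<in> dtri C" and u: "u \<in> Hom C Y W"
    and uf: "cmp C u f = zerm C X W"
  shows "\<exists>v \<in> Hom C Z W. cmp C v g = u"
proof -
  obtain Z0 where z: "is_zero_obj C Z0" using zero_obj_exists by blast
  have f: "f \<in> Hom C X Y" using dtri_homs[OF d] by auto
  have W: "W \<in> Ob C" and X: "X \<in> Ob C" using u f hom_obs by auto
  have a: "zerm C X Z0 \<in> Hom C X Z0" using zero_in_hom X zero_obj_in_Ob[OF z] by blast
  have "cmp C u f = cmp C (zerm C Z0 W) (zerm C X Z0)" using uf zero_comp a W by metis
  then obtain c where "tri_morph C X Y Z f g h Z0 W W (zerm C Z0 W) (idm C W)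
      (zerm C W (sh C Z0)) (zerm C X Z0) u c"
    using dtri_morphism_exists[OF d dtri_zero_id[OF z W] a u] by blast
  then have "c \<in> Hom C Z W" "cmp C c g = cmp C (idm C W) u" unfolding tri_morph_def by auto
  then show ?thesis using comp_id_left u by metis
qed

lemma dtri_eq_zero_if_comp_eq_zero:
  assumes d: "(X,Y,Z,f,g,h) \<in> dtri C" and u: "u \<in> Hom C W Y"
    and gu: "cmp C g u = zerm C W Z" and WX: "Hom C W X \<subseteq> {zerm C W X}"
  shows "u = zerm C W Y"
proof -
  obtain v where "v \<in> Hom C W X" "cmp C f v = u" using dtri_factors_through_fst[OF d u gu] by blast
  then show ?thesis using WX comp_zero dtri_homs[OF d] hom_obs u by blast
qed

lemma dtri_shift_snd_eq_zero:
  assumes d: "(P,Q,R,a,b,c) \<in> dtri C" and y: "y \<in> Hom C W (sh C Q)"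
    and by0: "cmp C (shm C b) y = zerm C W (sh C R)"
    and WP: "Hom C W (sh C P) \<subseteq> {zerm C W (sh C P)}"
  shows "y = zerm C W (sh C Q)"
proof -
  have "cmp C (negm C (shm C b)) y = zerm C W (sh C R)"
    using neg_comp_eq_zero_iff shm_in_hom dtri_homs[OF d] y by0 by blast
  then show ?thesis
    using dtri_eq_zero_if_comp_eq_zero[OF dtri_rotate[OF dtri_rotate[OF dtri_rotate[OF d]]] y _ WP]
    by blast
qed

lemma dtri_shift_fst_eq_zero:
  assumes d: "(P,Q,R,a,b,c) \<in> dtri C" and x: "x \<in> Hom C W (sh C P)"
    and ax: "cmp C (shm C a) x = zerm C W (sh C Q)"
    and WR: "Hom C W R \<subseteq> {zerm C W R}"
  shows "x = zerm C W (sh C P)"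
proof -
  have "cmp C (negm C (shm C a)) x = zerm C W (sh C Q)"
    using neg_comp_eq_zero_iff shm_in_hom dtri_homs[OF d] x ax by blast
  then show ?thesis
    using dtri_eq_zero_if_comp_eq_zero[OF dtri_rotate[OF dtri_rotate[OF d]] x _ WR] by blast
qed

subsection \<open>Split triangles\<close>

lemma dtri_connecting_zero_if_retraction:
  assumes d: "(Y,B,K,s,p,q) \<in> dtri C" and r: "r \<in> Hom C B Y" and rs: "cmp C r s = idm C Y"
  shows "q = zerm C K (sh C Y)"
proof -
  have s: "s \<in> Hom C Y B" and q: "q \<in> Hom C K (sh C Y)" using dtri_homs[OF d] by auto
  have Y: "Y \<in> Ob C" and K: "K \<in> Ob C" using s q hom_obs by auto
  have ss: "shm C s \<in> Hom C (sh C Y) (sh C B)" and sr: "shm C r \<in> Hom C (sh C B) (sh C Y)"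
    using shm_in_hom s r by blast+
  have "cmp C (negm C (shm C s)) q = zerm C K (sh C B)"
    using dtri_comp_zero[OF dtri_rotate[OF dtri_rotate[OF d]]] .
  then have sq0: "cmp C (shm C s) q = zerm C K (sh C B)" using neg_comp_eq_zero_iff ss q by blast
  have "q = cmp C (shm C (cmp C r s)) q" using rs shm_id[OF Y] comp_id_left[OF q] by simp
  also have "\<dots> = cmp C (shm C r) (cmp C (shm C s) q)" using shm_comp_assoc[OF s r q] by simp
  also have "\<dots> = zerm C K (sh C Y)" using sq0 comp_zero[OF sr K] by simp
  finally show ?thesis .
qed

lemma dtri_cancel_snd_if_connecting_zero:
  assumes d: "(Y,B,K,s,p,q) \<in> dtri C" and q0: "q = zerm C K (sh C Y)"
    and x: "x \<in> Hom C K W" and xp: "cmp C x p = zerm C B W"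
  shows "x = zerm C K W"
proof -
  obtain y where "y \<in> Hom C (sh C Y) W" "cmp C y q = x"
    using dtri_factors_through_snd[OF dtri_rotate[OF d] x xp] by blast
  then show ?thesis using q0 comp_zero hom_obs x by blast
qed

lemma retraction_complement:
  assumes s: "s \<in> Hom C Y B" and r: "r \<in> Hom C B Y" and rs: "cmp C r s = idm C Y"
    and e: "e = addm C (idm C B) (negm C (cmp C s r))"
  shows "e \<in> Hom C B B" and "cmp C e s = zerm C Y B" and "cmp C r e = zerm C B Y"
    and "addm C (cmp C s r) e = idm C B"
    and "\<And>x W. x \<in> Hom C B W \<Longrightarrow> cmp C x s = zerm C Y W \<Longrightarrow> cmp C x e = x"
proof -
  have B: "B \<in> Ob C" using s hom_obs by blast
  have sr: "cmp C s r \<in> Hom C B B" using comp_in_hom r s by blast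
  have nsr: "negm C (cmp C s r) \<in> Hom C B B" using neg_in_hom sr by blast
  have idB: "idm C B \<in> Hom C B B" using id_in_hom B by blast
  show "e \<in> Hom C B B" unfolding e using add_in_hom nsr idB by blast
  have comp_e: "cmp C x e = addm C x (negm C (cmp C (cmp C x s) r))" if x: "x \<in> Hom C B W" for x W
    unfolding e using comp_add_distrib[OF idB nsr x] comp_id_right[OF x] comp_neg[OF sr x]
      comp_assoc[OF r s x] by simp
  have srs: "cmp C (cmp C s r) s = s" using comp_assoc[OF s r s] rs comp_id_right[OF s] by simp
  show "cmp C e s = zerm C Y B"
    unfolding e using add_comp_distrib[OF s idB nsr] neg_comp[OF sr s] srs comp_id_left[OF s]
      add_neg_right[OF s] by simp
  show "cmp C r e = zerm C B Y" using comp_e[OF r] rs comp_id_left[OF r] add_neg_right[OF r] by simp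
  show "addm C (cmp C s r) e = idm C B"
    unfolding e using add_assoc[OF sr idB nsr] add_commute[OF sr idB] add_assoc[OF idB sr nsr]
      add_neg_right[OF sr] add_zero_right[OF idB] by simp
  show "cmp C x e = x" if x: "x \<in> Hom C B W" and xs: "cmp C x s = zerm C Y W" for x W
  proof -
    have "Y \<in> Ob C" "W \<in> Ob C" using s x hom_obs by auto
    then show ?thesis using comp_e[OF x] xs zero_comp[OF r] neg_zero[OF B] add_zero_right[OF x]
      by simp
  qed
qed

lemma dtri_biproduct_if_retraction:
  assumes d: "(Y,B,K,s,p,q) \<in> dtri C" and r: "r \<in> Hom C B Y" and rs: "cmp C r s = idm C Y"
  shows "\<exists>i. is_biproduct C Y K B s i r p"
proof -
  have s: "s \<in> Hom C Y B" and p: "p \<in> Hom C B K" using dtri_homs[OF d] by auto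
  have K: "K \<in> Ob C" using p hom_obs by blast
  have q0: "q = zerm C K (sh C Y)" using dtri_connecting_zero_if_retraction[OF d r rs] .
  define e where "e = addm C (idm C B) (negm C (cmp C s r))"
  note e = retraction_complement[OF s r rs e_def]
  have ps: "cmp C p s = zerm C Y K" using dtri_comp_zero[OF d] .
  obtain i where i: "i \<in> Hom C K B" "cmp C i p = e"
    using dtri_factors_through_snd[OF d e(1,2)] by blast
  have pi: "cmp C p i \<in> Hom C K K" and idK: "idm C K \<in> Hom C K K"
    using comp_in_hom i p id_in_hom K by blast+
  have "cmp C (addm C (cmp C p i) (negm C (idm C K))) p = addm C (cmp C p e) (negm C p)"
    using add_comp_distrib[OF p pi neg_in_hom[OF idK]] comp_assoc[OF p i(1) p] i(2)
      neg_comp[OF idK p] comp_id_left[OF p] by simp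
  also have "\<dots> = zerm C B K" using e(5)[OF p ps] add_neg_right[OF p] by simp
  finally have "addm C (cmp C p i) (negm C (idm C K)) = zerm C K K"
    by (rule dtri_cancel_snd_if_connecting_zero[OF d q0 add_in_hom[OF pi neg_in_hom[OF idK]]])
  then have pi1: "cmp C p i = idm C K" using eq_if_add_neg_eq_zero pi idK by blast
  have "cmp C (cmp C r i) p = zerm C B Y" using comp_assoc[OF p i(1) r] i(2) e(3) by simp
  then have ri0: "cmp C r i = zerm C K Y"
    by (rule dtri_cancel_snd_if_connecting_zero[OF d q0 comp_in_hom[OF i(1) r]])
  show ?thesis unfolding is_biproduct_def using s i r p rs pi1 ps ri0 e(4) i(2) by auto
qed

subsection \<open>Cotorsion pairs\<close>

lemma ext1_zero_hom_shift_sub_eq_zero: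
  assumes ext: "ext1_zero C A D" and P: "P \<in> A" and Z: "Z \<in> shift_sub C D"
    and u: "u \<in> Hom C P Z"
  shows "u = zerm C P Z"
proof -
  obtain v phi psi where v: "v \<in> D" and phi: "phi \<in> Hom C Z (sh C v)"
    and psi: "psi \<in> Hom C (sh C v) Z" and pp: "cmp C psi phi = idm C Z"
    using Z unfolding shift_sub_def isomorphic_def iso_def by blast
  have "cmp C phi u = zerm C P (sh C v)" using ext P v comp_in_hom[OF u phi]
    unfolding ext1_zero_def by blast
  moreover have "P \<in> Ob C" using hom_obs u by blast
  ultimately have "cmp C psi (cmp C phi u) = zerm C P Z" using comp_zero[OF psi] by simp
  then show ?thesis using comp_assoc[OF u phi psi] pp comp_id_left[OF u] by simp
qed

text \<open>Given \<open>a \<rightarrow> Y[1] \<rightarrow> Z \<rightarrow> a[1]\<close> with \<open>Z \<cong> b[1]\<close>, the first map vanishes, so \<open>Y[1]\<close> and hence \<open>Y\<close>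
is a retract of \<open>b\<close>, and \<open>B\<close> is closed under direct summands.\<close>

lemma cotorsion_pair_mem_right:
  assumes cp: "cotorsion_pair C A B" and Y: "Y \<in> Ob C" and ext: "ext1_zero C A {Y}"
  shows "Y \<in> B"
proof -
  have sY: "sh C Y \<in> Ob C" using sh_in_Ob Y by blast
  then obtain a Z f g h where a: "a \<in> A" and Z: "Z \<in> shift_sub C B"
    and d: "(a, sh C Y, Z, f, g, h) \<in> dtri C"
    using cp unfolding cotorsion_pair_def star_def by blast
  have f: "f \<in> Hom C a (sh C Y)" and g: "g \<in> Hom C (sh C Y) Z" using dtri_homs[OF d] by auto
  have "f = zerm C a (sh C Y)" using ext a f unfolding ext1_zero_def by blast
  then have "cmp C (idm C (sh C Y)) f = zerm C a (sh C Y)" using comp_id_left[OF f] by simp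
  then obtain r where r: "r \<in> Hom C Z (sh C Y)" "cmp C r g = idm C (sh C Y)"
    using dtri_factors_through_snd[OF d id_in_hom[OF sY]] by blast
  obtain b phi psi where b: "b \<in> B" and phi: "phi \<in> Hom C Z (sh C b)"
    and psi: "psi \<in> Hom C (sh C b) Z" and pp: "cmp C psi phi = idm C Z"
    using Z unfolding shift_sub_def isomorphic_def iso_def by blast
  have b_Ob: "b \<in> Ob C" using b cp unfolding cotorsion_pair_def subcat_def by blast
  have "cmp C (cmp C r psi) (cmp C phi g) = cmp C r (cmp C (cmp C psi phi) g)"
    using comp_assoc[OF comp_in_hom[OF g phi] psi r(1)] comp_assoc[OF g phi psi] by simp
  also have "\<dots> = idm C (sh C Y)" using pp comp_id_left[OF g] r(2) by simp
  finally have rs': "cmp C (cmp C r psi) (cmp C phi g) = idm C (sh C Y)" .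
  obtain s where s: "s \<in> Hom C Y b" "shm C s = cmp C phi g"
    using shm_surj[OF Y b_Ob] comp_in_hom[OF g phi] by blast
  obtain r0 where r0: "r0 \<in> Hom C b Y" "shm C r0 = cmp C r psi"
    using shm_surj[OF b_Ob Y] comp_in_hom[OF psi r(1)] by blast
  have "shm C (cmp C r0 s) = shm C (idm C Y)"
    using shm_comp[OF s(1) r0(1)] s(2) r0(2) rs' shm_id[OF Y] by simp
  then have r0s: "cmp C r0 s = idm C Y"
    using shm_inj[OF comp_in_hom[OF s(1) r0(1)] id_in_hom[OF Y]] by simp
  obtain K p q where "(Y, b, K, s, p, q) \<in> dtri C" using dtri_exists s by blast
  then have "\<exists>i. is_biproduct C Y K b s i r0 p"
    by (rule dtri_biproduct_if_retraction[OF _ r0(1) r0s])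
  then obtain i where "is_biproduct C Y K b s i r0 p" ..
  moreover have "subcat C B" using cp unfolding cotorsion_pair_def by blast
  ultimately show ?thesis using b unfolding subcat_def by blast
qed

end

subsection \<open>Twin cotorsion pairs\<close>

locale triangulated_twin_cotorsion = triangulated_category C
  for C :: "('o,'m,'x) tricat_scheme" +
  fixes S T U V :: "'o set"
  assumes twin: "twin_cotorsion_pair C S T U V"
begin

lemma cotorsion_ST: "cotorsion_pair C S T" and cotorsion_UV: "cotorsion_pair C U V"
  and ext1_SV: "ext1_zero C S V"
  using twin unfolding twin_cotorsion_pair_def by auto

lemma ext1_ST: "ext1_zero C S T" and ext1_UV: "ext1_zero C U V" and S_Ob: "S \<subseteq> Ob C"
  using cotorsion_ST cotorsion_UV unfolding cotorsion_pair_def subcat_def by auto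

lemma U_approximation:
  "A \<in> Ob C \<Longrightarrow> \<exists>P Z p q r. P \<in> U \<and> Z \<in> shift_sub C V \<and> (P, A, Z, p, q, r) \<in> dtri C"
  using cotorsion_UV unfolding cotorsion_pair_def star_def by blast

lemma Cplus_shm_comp_eq_zero:
  assumes M: "M \<in> Cplus C T U V" and P: "P \<in> U" and u: "u \<in> Hom C P M"
    and s: "s \<in> S" and x: "x \<in> Hom C s (sh C P)"
  shows "cmp C (shm C u) x = zerm C s (sh C M)"
proof -
  obtain W Z a b c where W: "W \<in> T \<inter> U" and Z: "Z \<in> shift_sub C V"
    and d: "(W, M, Z, a, b, c) \<in> dtri C"
    using M unfolding Cplus_def star_def by blast
  have b: "b \<in> Hom C M Z" using dtri_homs[OF d] by auto
  have PZ: "P \<in> Ob C" "Z \<in> Ob C" using hom_obs u b by auto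
  have "cmp C b u = zerm C P Z"
    using ext1_zero_hom_shift_sub_eq_zero[OF ext1_UV P Z comp_in_hom[OF u b]] .
  then have "cmp C (shm C b) (cmp C (shm C u) x) = cmp C (shm C (zerm C P Z)) x"
    using shm_comp_assoc[OF u b x] by simp
  also have "\<dots> = zerm C s (sh C Z)"
    using shm_zero[OF PZ] zero_comp[OF x sh_in_Ob[OF PZ(2)]] by simp
  finally have "cmp C (shm C b) (cmp C (shm C u) x) = zerm C s (sh C Z)" .
  moreover have "Hom C s (sh C W) \<subseteq> {zerm C s (sh C W)}"
    using ext1_ST s W unfolding ext1_zero_def by blast
  ultimately show ?thesis
    by (rule dtri_shift_snd_eq_zero[OF d comp_in_hom[OF x shm_in_hom[OF u]]])
qed

lemma U_approximation_in_T:
  assumes d: "(P, A, Z, p, q, r) \<in> dtri C" and Z: "Z \<in> shift_sub C V"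
    and px: "\<And>s x. s \<in> S \<Longrightarrow> x \<in> Hom C s (sh C P) \<Longrightarrow> cmp C (shm C p) x = zerm C s (sh C A)"
  shows "P \<in> T"
proof -
  have P: "P \<in> Ob C" using dtri_homs[OF d] hom_obs by blast
  have "Hom C s (sh C P) = {zerm C s (sh C P)}" if s: "s \<in> S" for s
  proof -
    have "Hom C s Z \<subseteq> {zerm C s Z}"
      using ext1_zero_hom_shift_sub_eq_zero[OF ext1_SV s Z] by blast
    then have "x = zerm C s (sh C P)" if "x \<in> Hom C s (sh C P)" for x
      using dtri_shift_fst_eq_zero[OF d that px[OF s that]] by blast
    then show ?thesis using zero_in_hom S_Ob s sh_in_Ob P by blast
  qed
  then show ?thesis
    using cotorsion_pair_mem_right[OF cotorsion_ST P] unfolding ext1_zero_def by blast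
qed

lemma Cplus_if_dtri_T_Cplus:
  assumes d: "(X, A, B, t, f, g) \<in> dtri C" and X: "X \<in> T" and B: "B \<in> Cplus C T U V"
  shows "A \<in> Cplus C T U V"
proof -
  have f: "f \<in> Hom C A B" using dtri_homs[OF d] by auto
  have A: "A \<in> Ob C" using f hom_obs by blast
  then obtain P Z p q r where P: "P \<in> U" and Z: "Z \<in> shift_sub C V"
    and dA: "(P, A, Z, p, q, r) \<in> dtri C" using U_approximation by blast
  have p: "p \<in> Hom C P A" using dtri_homs[OF dA] by auto
  have "P \<in> T"
  proof (rule U_approximation_in_T[OF dA Z])
    fix s x assume s: "s \<in> S" and x: "x \<in> Hom C s (sh C P)"
    have "cmp C (shm C f) (cmp C (shm C p) x) = zerm C s (sh C B)"
      using Cplus_shm_comp_eq_zero[OF B P comp_in_hom[OF p f] s x] shm_comp_assoc[OF p f x]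
      by simp
    moreover have "Hom C s (sh C X) \<subseteq> {zerm C s (sh C X)}"
      using ext1_ST s X unfolding ext1_zero_def by blast
    ultimately show "cmp C (shm C p) x = zerm C s (sh C A)"
      using dtri_shift_snd_eq_zero[OF d] comp_in_hom[OF x shm_in_hom[OF p]] by blast
  qed
  then show ?thesis using A P Z dA unfolding Cplus_def star_def by blast
qed

lemma Cplus_if_dtri_V_Cplus:
  assumes d: "(X, A, B, t, f, g) \<in> dtri C" and X: "X \<in> V" and A: "A \<in> Cplus C T U V"
  shows "B \<in> Cplus C T U V"
proof -
  have f: "f \<in> Hom C A B" and g: "g \<in> Hom C B (sh C X)" using dtri_homs[OF d] by auto
  have B: "B \<in> Ob C" using f hom_obs by blast
  then obtain P Z p q r where P: "P \<in> U" and Z: "Z \<in> shift_sub C V"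
    and dB: "(P, B, Z, p, q, r) \<in> dtri C" using U_approximation by blast
  have p: "p \<in> Hom C P B" using dtri_homs[OF dB] by auto
  have "cmp C g p = zerm C P (sh C X)"
    using ext1_UV P X comp_in_hom[OF p g] unfolding ext1_zero_def by blast
  then obtain p' where p': "p' \<in> Hom C P A" "cmp C f p' = p"
    using dtri_factors_through_fst[OF dtri_rotate[OF d] p] by blast
  have "P \<in> T"
  proof (rule U_approximation_in_T[OF dB Z])
    fix s x assume s: "s \<in> S" and x: "x \<in> Hom C s (sh C P)"
    have "cmp C (shm C p) x = cmp C (shm C f) (cmp C (shm C p') x)"
      using shm_comp_assoc[OF p'(1) f x] p'(2) by simp
    then show "cmp C (shm C p) x = zerm C s (sh C B)"
      using Cplus_shm_comp_eq_zero[OF A P p'(1) s x] comp_zero shm_in_hom[OF f] S_Ob s by auto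
  qed
  then show ?thesis using B P Z dB unfolding Cplus_def star_def by blast
qed

end

theorem lemma2p13:
  fixes C :: "('o,'m) tricat" and S T U V :: "'o set"
  assumes "triangulated C"
    and "twin_cotorsion_pair C S T U V"
  shows "(\<forall>X A B t f g. (X, A, B, t, f, g) \<in> dtri C \<and> X \<in> T \<and> B \<in> Cplus C T U V
            \<longrightarrow> A \<in> Cplus C T U V)
       \<and> (\<forall>X A B t f g. (X, A, B, t, f, g) \<in> dtri C \<and> X \<in> V \<and> A \<in> Cplus C T U V
            \<longrightarrow> B \<in> Cplus C T U V)"
proof -
  interpret triangulated_twin_cotorsion C S T U V
    using assms by (intro triangulated_twin_cotorsion.intro triangulated_category.intro
      triangulated_twin_cotorsion_axioms.intro)
  show ?thesis using Cplus_if_dtri_T_Cplus Cplus_if_dtri_V_Cplus by blast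
qed

end
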